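(* Let $(A,\circ_A,\vdash_A,\dashv_A)$ be a Gel'fand–Dorfman dialgebra and $P:A\to A$ a linear map which is a derivation of each of the three multiplications $\circ_A,\vdash_A,\dashv_A$. Define $x\cdot_A y=x\circ_A y+P(x)\vdash_A y-P(y)\dashv_A x$ for all $x,y\in A$. Then $(A,\cdot_A)$ is a Leibniz algebra.
   Context: All vector spaces are over a field $\mathbb K$ of characteristic zero. A Leibniz algebra is a vector space with multiplication $\circ$ satisfying $x\circ(y\circ z)=(x\circ y)\circ z+y\circ(x\circ z)$. A linear map $P$ is a derivation of a multiplication $\ast$ if $P(x\ast y)=P(x)\ast y+x\ast P(y)$. A Novikov dialgebra is $(A,\vdash_A,\dashv_A)$ satisfying for all $x,y,z$: (ND1) $x\vdash_A(y\vdash_A z)=(x\vdash_A y)\vdash_A z-(y\dashv_A x)\vdash_A z+y\vdash_A(x\vdash_A z)$; (ND2) $(y\vdash_A z)\dashv_A x=y\vdash_A(z\dashv_A x)-z\dashv_A(y\vdash_A x)+(z\dashv_A y)\dashv_A x$; (ND3) $z\dashv_A(x\vdash_A y)=z\dashv_A(x\dashv_A y)$; (ND4) $(z\dashv_A y)\dashv_A x=(z\dashv_A x)\dashv_A y$; (ND5) $(y\dashv_A x)\vdash_A z=(y\vdash_A z)\dashv_A x=(y\vdash_A x)\vdash_A z$. A Gel'fand–Dorfman dialgebra is $(A,\circ_A,\vdash_A,\dashv_A)$ such that $(A,\circ_A)$ is a Leibniz algebra, $(A,\vdash_A,\dashv_A)$ is a Novikov dialgebra, and for all $x,y,z$: (GD1)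 $x\vdash_A(y\circ_A z)-(x\vdash_A y)\circ_A z-(x\circ_A y)\vdash_A z-y\circ_A(x\vdash_A z)+(x\circ_A z)\dashv_A y=0$; (GD2) $x\circ_A(y\vdash_A z)-(y\circ_A z)\dashv_A x+(y\dashv_A x)\circ_A z-(x\circ_A y)\vdash_A z-y\vdash_A(x\circ_A z)=0$; (GD3) $x\circ_A(z\dashv_A y)+(y\circ_A z)\dashv_A x-z\dashv_A(x\circ_A y)-y\circ_A(z\dashv_A x)-(x\circ_A z)\dashv_A y=0$. *)

theory Defs
  imports Complex_Main
begin

definition bilinear_op :: "('k::field \<Rightarrow> 'v::ab_group_add \<Rightarrow> 'v) \<Rightarrow> ('v \<Rightarrow> 'v \<Rightarrow> 'v) \<Rightarrow> bool" where
  "bilinear_op scale m \<longleftrightarrow>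
     (\<forall>y. Vector_Spaces.linear scale scale (\<lambda>x. m x y)) \<and>
     (\<forall>x. Vector_Spaces.linear scale scale (\<lambda>y. m x y))"

definition leibniz_algebra :: "('k::field \<Rightarrow> 'v::ab_group_add \<Rightarrow> 'v) \<Rightarrow> ('v \<Rightarrow> 'v \<Rightarrow> 'v) \<Rightarrow> bool" where
  "leibniz_algebra scale c \<longleftrightarrow> bilinear_op scale c \<and>
     (\<forall>x y z. c x (c y z) = c (c x y) z + c y (c x z))"

definition is_derivation :: "('v \<Rightarrow> 'v) \<Rightarrow> ('v \<Rightarrow> 'v \<Rightarrow> 'v::ab_group_add) \<Rightarrow> bool" where
  "is_derivation P m \<longleftrightarrow> (\<forall>x y. P (m x y) = m (P x) y + m x (P y))"

definition novikov_dialgebra :: "('k::field \<Rightarrow> 'v::ab_group_add \<Rightarrow> 'v) \<Rightarrow> ('v \<Rightarrow> 'v \<Rightarrow> 'v) \<Rightarrow> ('v \<Rightarrow> 'v \<Rightarrow> 'v) \<Rightarrow> bool" where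
  "novikov_dialgebra scale l r \<longleftrightarrow> bilinear_op scale l \<and> bilinear_op scale r \<and>
    (\<forall>x y z.
      l x (l y z) = l (l x y) z - l (r y x) z + l y (l x z) \<and>
      r (l y z) x = l y (r z x) - r z (l y x) + r (r z y) x \<and>
      r z (l x y) = r z (r x y) \<and>
      r (r z y) x = r (r z x) y \<and>
      l (r y x) z = r (l y z) x \<and> r (l y z) x = l (l y x) z)"

definition GD_dialgebra :: "('k::field \<Rightarrow> 'v::ab_group_add \<Rightarrow> 'v) \<Rightarrow> ('v \<Rightarrow> 'v \<Rightarrow> 'v) \<Rightarrow> ('v \<Rightarrow> 'v \<Rightarrow> 'v) \<Rightarrow> ('v \<Rightarrow> 'v \<Rightarrow> 'v) \<Rightarrow> bool" where
  "GD_dialgebra scale c l r \<longleftrightarrow> leibniz_algebra scale c \<and> novikov_dialgebra scale l r \<and>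
    (\<forall>x y z.
      l x (c y z) - c (l x y) z - l (c x y) z - c y (l x z) + r (c x z) y = 0 \<and>
      c x (l y z) - r (c y z) x + c (r y x) z - l (c x y) z - l y (c x z) = 0 \<and>
      c x (r z y) + r (c y z) x - r z (c x y) - c y (r z x) - r (c x z) y = 0)"

end

theory Submission
  imports Defs
begin

text \<open>Write the new product as \<open>x \<circ> y + e x y\<close> with \<open>e x y = P x \<turnstile> y - P y \<stileturn> x\<close>.
  The Leibniz defect \<open>J m n x y z = m x (n y z) - m (n x y) z - m y (n x z)\<close> is biadditive in
  the pair of products, so the defect of \<open>\<circ> + e\<close> splits by the number of occurrences of \<open>P\<close>:
  the part without \<open>P\<close> is the Leibniz identity of \<open>\<circ>\<close>; the part with two \<open>P\<close>'s is the
  defect of \<open>e\<close>, which vanishes by (ND1)--(ND5) because \<open>P\<close> is a derivation of \<open>\<turnstile>\<close> and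
  \<open>\<stileturn>\<close>; the mixed part vanishes by (GD1)--(GD3) because \<open>P\<close> is a derivation of \<open>\<circ>\<close>.\<close>

lemma linear_imp_vector_space_pair: "Vector_Spaces.linear s1 s2 f \<Longrightarrow> vector_space_pair s1 s2"
  unfolding Vector_Spaces.linear_def vector_space_pair_def by blast

lemma linear_add_diff:
  assumes "Vector_Spaces.linear s1 s2 f"
  shows "f (a + b) = f a + f b" "f (a - b) = f a - f b"
  using vector_space_pair.linear_add vector_space_pair.linear_diff
    linear_imp_vector_space_pair assms by blast+

lemma bilinear_op_add_diff:
  assumes "bilinear_op s m"
  shows "m (a + b) y = m a y + m b y" "m (a - b) y = m a y - m b y"
    and "m x (a + b) = m x a + m x b" "m x (a - b) = m x a - m x b"
  using assms linear_add_diff unfolding bilinear_op_def by blast+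

lemma bilinear_op_add:
  assumes "bilinear_op s m" "bilinear_op s n"
  shows "bilinear_op s (\<lambda>x y. m x y + n x y)"
  using assms vector_space_pair.linear_compose_add linear_imp_vector_space_pair
  unfolding bilinear_op_def by metis

lemma bilinear_op_diff:
  assumes "bilinear_op s m" "bilinear_op s n"
  shows "bilinear_op s (\<lambda>x y. m x y - n x y)"
  using assms vector_space_pair.linear_compose_sub linear_imp_vector_space_pair
  unfolding bilinear_op_def by metis

lemma bilinear_op_flip: "bilinear_op s m \<Longrightarrow> bilinear_op s (\<lambda>x y. m y x)"
  unfolding bilinear_op_def by blast

lemma bilinear_op_compose_left:
  assumes "bilinear_op s m" "Vector_Spaces.linear s s P"
  shows "bilinear_op s (\<lambda>x y. m (P x) y)"
  using assms Vector_Spaces.linear_compose[of s s P s]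
  unfolding bilinear_op_def comp_def by blast

definition leibniz_defect ::
    "('v \<Rightarrow> 'v \<Rightarrow> 'v::ab_group_add) \<Rightarrow> ('v \<Rightarrow> 'v \<Rightarrow> 'v) \<Rightarrow> 'v \<Rightarrow> 'v \<Rightarrow> 'v \<Rightarrow> 'v" where
  "leibniz_defect m n x y z = m x (n y z) - m (n x y) z - m y (n x z)"

lemma leibniz_algebra_iff_defect:
  "leibniz_algebra s m \<longleftrightarrow> bilinear_op s m \<and> (\<forall>x y z. leibniz_defect m m x y z = 0)"
  by (simp add: leibniz_algebra_def leibniz_defect_def diff_diff_eq)

lemma leibniz_defect_add:
  assumes "bilinear_op s m" "bilinear_op s n"
  shows "leibniz_defect (\<lambda>x y. m x y + n x y) (\<lambda>x y. m x y + n x y) x y z =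
    leibniz_defect m m x y z + (leibniz_defect m n x y z + leibniz_defect n m x y z)
      + leibniz_defect n n x y z"
  by (simp add: leibniz_defect_def bilinear_op_add_diff[OF assms(1)] bilinear_op_add_diff[OF assms(2)]
      algebra_simps)

lemma novikov_dialgebra_derivation_defect:
  assumes nd: "novikov_dialgebra s l r" and P: "Vector_Spaces.linear s s P"
    and "is_derivation P l" "is_derivation P r"
  shows "leibniz_defect (\<lambda>x y. l (P x) y - r (P y) x) (\<lambda>x y. l (P x) y - r (P y) x) x y z = 0"
proof -
  have bl: "bilinear_op s l" and br: "bilinear_op s r"
    using nd unfolding novikov_dialgebra_def by auto
  note expand = bilinear_op_add_diff[OF bl] bilinear_op_add_diff[OF br] linear_add_diff[OF P]
    assms(3,4)[unfolded is_derivation_def, rule_format]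
  have nd1: "l x (l y z) = l (l x y) z - l (r y x) z + l y (l x z)"
   and nd2: "r (l y z) x = l y (r z x) - r z (l y x) + r (r z y) x"
   and nd3: "r z (l x y) = r z (r x y)"
   and nd4: "r (r z y) x = r (r z x) y"
   and nd5: "l (r y x) z = r (l y z) x" "r (l y z) x = l (l y x) z" for x y z
    using nd unfolding novikov_dialgebra_def by blast+
  have "l (r (P (P y)) x) z = r (l (P (P y)) z) x" (is "?a1 = ?b1") by (fact nd5)
  moreover have "l (P x) (l (P y) z) = l (l (P x) (P y)) z - l (r (P y) (P x)) z + l (P y) (l (P x) z)"
    (is "?a2 = ?b2") by (fact nd1)
  moreover have "l (P (P x)) (l y z) = l (l (P (P x)) y) z - l (r y (P (P x))) z + l y (l (P (P x)) z)"
    (is "?a3 = ?b3") by (fact nd1)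
  moreover have "l y (l (P (P x)) z) = l (l y (P (P x))) z - l (r (P (P x)) y) z + l (P (P x)) (l y z)"
    (is "?a4 = ?b4") by (fact nd1)
  moreover have "l (r y (P (P x))) z = r (l y z) (P (P x))" (is "?a5 = ?b5") by (fact nd5)
  moreover have "r (l y z) (P (P x)) = l (l y (P (P x))) z" (is "?a6 = ?b6") by (fact nd5)
  moreover have "l (r (P (P x)) y) z = r (l (P (P x)) z) y" (is "?a7 = ?b7") by (fact nd5)
  moreover have "r (r (P (P z)) y) x = r (r (P (P z)) x) y" (is "?a8 = ?b8") by (fact nd4)
  moreover have "r (l (P y) (P z)) x = l (P y) (r (P z) x) - r (P z) (l (P y) x) + r (r (P z) (P y)) x"
    (is "?a9 = ?b9") by (fact nd2)
  moreover have "r (P z) (l (P y) x) = r (P z) (r (P y) x)" (is "?a10 = ?b10") by (fact nd3)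
  moreover have "r (l (P x) (P z)) y = l (P x) (r (P z) y) - r (P z) (l (P x) y) + r (r (P z) (P x)) y"
    (is "?a11 = ?b11") by (fact nd2)
  moreover have "leibniz_defect (\<lambda>x y. l (P x) y - r (P y) x) (\<lambda>x y. l (P x) y - r (P y) x) x y z =
      (?a1 - ?b1) + (?a2 - ?b2) + (?a3 - ?b3) + (?a4 - ?b4) - (?a5 - ?b5) - (?a6 - ?b6) - (?a7 - ?b7)
      + (?a8 - ?b8) - (?a9 - ?b9) + (?a10 - ?b10) + (?a11 - ?b11)"
    by (simp add: leibniz_defect_def expand algebra_simps)
  ultimately show ?thesis by simp
qed

lemma GD_dialgebra_derivation_mixed_defect:
  assumes gd: "GD_dialgebra s c l r" and P: "Vector_Spaces.linear s s P"
    and "is_derivation P c"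
  shows "leibniz_defect c (\<lambda>x y. l (P x) y - r (P y) x) x y z
    + leibniz_defect (\<lambda>x y. l (P x) y - r (P y) x) c x y z = 0"
proof -
  have bc: "bilinear_op s c" and bl: "bilinear_op s l" and br: "bilinear_op s r"
    using gd unfolding GD_dialgebra_def leibniz_algebra_def novikov_dialgebra_def by auto
  note expand = bilinear_op_add_diff[OF bc] bilinear_op_add_diff[OF bl] bilinear_op_add_diff[OF br]
    linear_add_diff[OF P] assms(3)[unfolded is_derivation_def, rule_format]
  have gd1: "l x (c y z) - c (l x y) z - l (c x y) z - c y (l x z) + r (c x z) y = 0"
   and gd2: "c x (l y z) - r (c y z) x + c (r y x) z - l (c x y) z - l y (c x z) = 0"
   and gd3: "c x (r z y) + r (c y z) x - r z (c x y) - c y (r z x) - r (c x z) y = 0" for x y z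
    using gd unfolding GD_dialgebra_def by blast+
  have "l (P x) (c y z) - c (l (P x) y) z - l (c (P x) y) z - c y (l (P x) z) + r (c (P x) z) y = 0"
    (is "?g1 = 0") by (fact gd1)
  moreover have "c x (l (P y) z) - r (c (P y) z) x + c (r (P y) x) z - l (c x (P y)) z - l (P y) (c x z) = 0"
    (is "?g2 = 0") by (fact gd2)
  moreover have "c x (r (P z) y) + r (c y (P z)) x - r (P z) (c x y) - c y (r (P z) x) - r (c x (P z)) y = 0"
    (is "?g3 = 0") by (fact gd3)
  moreover have "leibniz_defect c (\<lambda>x y. l (P x) y - r (P y) x) x y z
      + leibniz_defect (\<lambda>x y. l (P x) y - r (P y) x) c x y z = ?g1 + ?g2 - ?g3"
    by (simp add: leibniz_defect_def expand algebra_simps)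
  ultimately show ?thesis by simp
qed

lemma novikov_dialgebra_derivation_leibniz_algebra:
  assumes "novikov_dialgebra s l r" "Vector_Spaces.linear s s P"
    and "is_derivation P l" "is_derivation P r"
  shows "leibniz_algebra s (\<lambda>x y. l (P x) y - r (P y) x)"
proof -
  have "bilinear_op s l" "bilinear_op s r"
    using assms(1) unfolding novikov_dialgebra_def by auto
  then have "bilinear_op s (\<lambda>x y. l (P x) y - r (P y) x)"
    using bilinear_op_diff bilinear_op_flip bilinear_op_compose_left assms(2) by blast
  then show ?thesis
    unfolding leibniz_algebra_iff_defect
    using novikov_dialgebra_derivation_defect[OF assms] by blast
qed

theorem proposition3p12:
  fixes scale :: "'k::field_char_0 \<Rightarrow> 'v::ab_group_add \<Rightarrow> 'v"
    and c l r :: "'v \<Rightarrow> 'v \<Rightarrow> 'v" and P :: "'v \<Rightarrow> 'v"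
  assumes "vector_space scale"
    and "GD_dialgebra scale c l r"
    and "Vector_Spaces.linear scale scale P"
    and "is_derivation P c" and "is_derivation P l" and "is_derivation P r"
  shows "leibniz_algebra scale (\<lambda>x y. c x y + l (P x) y - r (P y) x)"
proof -
  define e where "e = (\<lambda>x y. l (P x) y - r (P y) x)"
  have nd: "novikov_dialgebra scale l r"
    using assms(2) unfolding GD_dialgebra_def by blast
  have "leibniz_algebra scale c"
    using assms(2) unfolding GD_dialgebra_def by blast
  then have bc: "bilinear_op scale c" and Jc: "\<And>x y z. leibniz_defect c c x y z = 0"
    by (simp_all add: leibniz_algebra_iff_defect)
  have "leibniz_algebra scale e"
    unfolding e_def using novikov_dialgebra_derivation_leibniz_algebra nd assms(3,5,6) by blast
  then have be: "bilinear_op scale e" and Je: "\<And>x y z. leibniz_defect e e x y z = 0"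
    by (simp_all add: leibniz_algebra_iff_defect)
  have mixed: "leibniz_defect c e x y z + leibniz_defect e c x y z = 0" for x y z
    unfolding e_def using GD_dialgebra_derivation_mixed_defect assms(2-4) by blast
  have "leibniz_algebra scale (\<lambda>x y. c x y + e x y)"
    unfolding leibniz_algebra_iff_defect
    using bilinear_op_add[OF bc be] leibniz_defect_add[OF bc be] Jc Je mixed by simp
  then show ?thesis
    by (simp add: e_def add_diff_eq)
qed

end
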